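(* For every $\alpha\in\{1,\dots,r+1\}$ and every $n\in\mathbb Z$, $$R_{\alpha,n}=\det_{1\le i,j\le \alpha}\bigl(R_{1,\,n+i+j-1-\alpha}\bigr).$$ In particular, since $R_{r+1,n}=1$, one has $\det_{1\le i,j\le r+1}(R_{1,n+i+j-r-2})=1$ for all $n\in\mathbb Z$.
   Context: Fix an integer $r\ge1$ and let $I_r=\{1,\dots,r\}$. Let $R_{1,0},\dots,R_{r,0},R_{1,1},\dots,R_{r,1}$ be $2r$ algebraically independent indeterminates over $\mathbb Q$. The (renormalized) $A_r$ $Q$-system is the unique family $(R_{\alpha,n})_{0\le\alpha\le r+1,\ n\in\mathbb Z}$ of nonzero elements of the field $\mathbb Q(R_{1,0},\dots,R_{r,1})$ with these initial values, $R_{0,n}=R_{r+1,n}=1$ for all $n$, and $$R_{\alpha,n+1}R_{\alpha,n-1}=R_{\alpha,n}^2+R_{\alpha+1,n}R_{\alpha-1,n}\qquad(\alpha\in I_r,\ n\in\mathbb Z),$$ the relation being solved forward and backward in $n$. *)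

theory Defs
  imports "Jordan_Normal_Form.Determinant"
begin

text \<open>A polynomial is given by a finite set S of exponent vectors (supported in I)
  and rational coefficients c.\<close>
definition alg_indep_Q :: "('i \<Rightarrow> 'a::field_char_0) \<Rightarrow> 'i set \<Rightarrow> bool" where
  "alg_indep_Q x I \<longleftrightarrow>
     (\<forall>(S :: ('i \<Rightarrow> nat) set) (c :: ('i \<Rightarrow> nat) \<Rightarrow> rat).
        finite S \<longrightarrow> (\<forall>e\<in>S. \<forall>i. i \<notin> I \<longrightarrow> e i = 0) \<longrightarrow>
        (\<Sum>e\<in>S. of_rat (c e) * (\<Prod>i\<in>I. x i ^ e i)) = 0 \<longrightarrow>
        (\<forall>e\<in>S. c e = 0))"

definition is_Q_system :: "nat \<Rightarrow> (nat \<Rightarrow> int \<Rightarrow> 'a::field) \<Rightarrow> bool" where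
  "is_Q_system r R \<longleftrightarrow>
     (\<forall>a n. a \<le> r + 1 \<longrightarrow> R a n \<noteq> 0) \<and>
     (\<forall>n. R 0 n = 1 \<and> R (r + 1) n = 1) \<and>
     (\<forall>a n. 1 \<le> a \<and> a \<le> r \<longrightarrow>
        R a (n + 1) * R a (n - 1) = (R a n)^2 + R (a + 1) n * R (a - 1) n)"

text \<open>Hankel-type determinant det_{1<=i,j<=alpha} (R_{1, n+i+j-1-alpha}),
  written with 0-based indices i,j < alpha.\<close>
definition hankel_det :: "(nat \<Rightarrow> int \<Rightarrow> 'a::comm_ring_1) \<Rightarrow> nat \<Rightarrow> int \<Rightarrow> 'a" where
  "hankel_det R a n = det (mat a a (\<lambda>(i, j). R 1 (n + int i + int j + 1 - int a)))"

end

theory Submission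
  imports Defs "Jordan_Normal_Form.Char_Poly"
begin

(* The Q-system recurrence
     R(a,n+1) R(a,n-1) = R(a,n)^2 + R(a+1,n) R(a-1,n)
   determines R(a+1,.) from R(a,.) and R(a-1,.), because R(a-1,n) is nonzero.
   The Hankel determinants H(a,n) = det (R(1,n+i+j+1-a))_{i,j<a} satisfy the same
   recurrence: this is the Desnanot-Jacobi (Dodgson condensation) identity applied
   to the Hankel matrix of size a+1, whose four corner minors and interior minor
   are again Hankel matrices.  Since H(0,n) = R(0,n) = 1 and H(1,n) = R(1,n), a
   two-step induction on a gives R(a,n) = H(a,n) for all a <= r+1; the second
   claim is the case a = r+1, where R(r+1,n) = 1.
   The file first proves Desnanot-Jacobi for square matrices over an integral
   domain, then the Hankel recurrence, then the induction.  Multiplying A by the identity matrix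
   whose first and last columns are replaced by those of adj A gives
   det A * (corner minor expression) = det A^2 * det(interior); the factor det A
   is then cancelled by passing to the generic matrix x I + A over 'a poly,
   whose determinant is monic, and evaluating at x = 0. *)

section \<open>Determinant expansions along sparse lines\<close>

lemma det_single_entry_column:
  assumes A: "(A :: 'a :: comm_ring_1 mat) \<in> carrier_mat n n" and i: "i < n" and j: "j < n"
    and zero: "\<And>i'. i' < n \<Longrightarrow> i' \<noteq> i \<Longrightarrow> A $$ (i', j) = 0"
  shows "det A = A $$ (i, j) * cofactor A i j"
proof -
  have "det A = (\<Sum>i'<n. A $$ (i', j) * cofactor A i' j)"
    by (rule laplace_expansion_column[OF A j])
  also have "\<dots> = (\<Sum>i'<n. if i' = i then A $$ (i, j) * cofactor A i j else 0)"
    by (rule sum.cong) (auto simp: zero)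
  finally show ?thesis using i by simp
qed

lemma det_single_entry_row:
  assumes A: "(A :: 'a :: comm_ring_1 mat) \<in> carrier_mat n n" and i: "i < n" and j: "j < n"
    and zero: "\<And>j'. j' < n \<Longrightarrow> j' \<noteq> j \<Longrightarrow> A $$ (i, j') = 0"
  shows "det A = A $$ (i, j) * cofactor A i j"
proof -
  have "det A = (\<Sum>j'<n. A $$ (i, j') * cofactor A i j')"
    by (rule laplace_expansion_row[OF A i])
  also have "\<dots> = (\<Sum>j'<n. if j' = j then A $$ (i, j) * cofactor A i j else 0)"
    by (rule sum.cong) (auto simp: zero)
  finally show ?thesis using j by simp
qed

lemma det_zero_column:
  assumes A: "(A :: 'a :: comm_ring_1 mat) \<in> carrier_mat n n" and j: "j < n"
    and zero: "\<And>i. i < n \<Longrightarrow> A $$ (i, j) = 0"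
  shows "det A = 0"
  using laplace_expansion_column[OF A j] zero by simp

section \<open>The Desnanot--Jacobi identity\<close>

definition interior_mat :: "'a mat \<Rightarrow> nat \<Rightarrow> 'a mat" where
  "interior_mat A m = mat m m (\<lambda>(i, j). A $$ (Suc i, Suc j))"

lemma det_identity_but_first_last_column:
  fixes M :: "'a :: comm_ring_1 mat"
  assumes M: "M \<in> carrier_mat (Suc k) (Suc k)" and k: "k = Suc m"
    and id: "\<And>i j. i \<le> k \<Longrightarrow> j \<le> k \<Longrightarrow> j \<noteq> 0 \<Longrightarrow> j \<noteq> k \<Longrightarrow>
      M $$ (i, j) = (if i = j then 1 else 0)"
  shows "det M = M $$ (0, 0) * M $$ (k, k) - M $$ (k, 0) * M $$ (0, k)"
proof -
  text \<open>Expanding along column k, only rows 0 and k survive: every other row i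
    leaves a minor whose column i is zero.\<close>
  have "det M = (\<Sum>i<Suc k. M $$ (i, k) * cofactor M i k)"
    by (rule laplace_expansion_column[OF M]) simp
  also have "\<dots> = (\<Sum>i<Suc k. if i = 0 then M $$ (0, k) * cofactor M 0 k
      else if i = k then M $$ (k, k) * cofactor M k k else 0)"
  proof (rule sum.cong)
    fix i assume "i \<in> {..<Suc k}"
    moreover have "det (mat_delete M i k) = 0" if "i \<noteq> 0" "i \<noteq> k" "i < Suc k"
      by (rule det_zero_column[of _ k i]) (use M that k id in \<open>auto simp: mat_delete_def\<close>)
    ultimately show "M $$ (i, k) * cofactor M i k = (if i = 0 then M $$ (0, k) * cofactor M 0 k
      else if i = k then M $$ (k, k) * cofactor M k k else 0)"
      by (auto simp: cofactor_def)
  qed simp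
  also have "\<dots> = M $$ (0, k) * cofactor M 0 k + M $$ (k, k) * cofactor M k k"
    using k by (simp add: sum.If_cases)
  finally have expansion: "det M = M $$ (0, k) * cofactor M 0 k + M $$ (k, k) * cofactor M k k" .
  text \<open>Both minors have a row with a single nonzero entry, whose own minor is the identity.\<close>
  have minor_kk: "det (mat_delete M k k) = M $$ (0, 0)"
  proof -
    define B where "B = mat_delete M k k"
    have B: "B \<in> carrier_mat k k" using M unfolding B_def carrier_mat_def by (simp add: mat_delete_def)
    have "det B = B $$ (0, 0) * cofactor B 0 0"
      by (rule det_single_entry_row[OF B]) (use M k id in \<open>auto simp: B_def mat_delete_def\<close>)
    moreover have "mat_delete B 0 0 = 1\<^sub>m m"
      by (rule eq_matI) (use M k id in \<open>auto simp: B_def mat_delete_def\<close>)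
    ultimately show ?thesis using M k by (simp add: B_def cofactor_def mat_delete_def)
  qed
  have minor_0k: "det (mat_delete M 0 k) = (-1) ^ m * M $$ (k, 0)"
  proof -
    define B where "B = mat_delete M 0 k"
    have B: "B \<in> carrier_mat k k" using M unfolding B_def carrier_mat_def by (simp add: mat_delete_def)
    have "det B = B $$ (m, 0) * cofactor B m 0"
      by (rule det_single_entry_row[OF B]) (use M k id in \<open>auto simp: B_def mat_delete_def\<close>)
    moreover have "mat_delete B m 0 = 1\<^sub>m m"
      by (rule eq_matI) (use M k id in \<open>auto simp: B_def mat_delete_def\<close>)
    ultimately show ?thesis using M k by (simp add: B_def cofactor_def mat_delete_def)
  qed
  show ?thesis
    unfolding expansion cofactor_def minor_kk minor_0k using k
    by (simp add: power_add algebra_simps)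
qed

lemma det_scaled_unit_first_last_column:
  fixes A :: "'a :: comm_ring_1 mat"
  assumes k: "k = Suc m"
  shows "det (mat (Suc k) (Suc k) (\<lambda>(i, j). if j = 0 \<or> j = k then (if i = j then d else 0)
      else A $$ (i, j))) = d ^ 2 * det (interior_mat A m)"
    (is "det ?P = _")
proof -
  have P: "?P \<in> carrier_mat (Suc k) (Suc k)" by simp
  have "det ?P = d * det (mat_delete ?P 0 0)"
    using det_single_entry_column[OF P, of 0 0] by (auto simp: cofactor_def)
  also have "det (mat_delete ?P 0 0) = d * det (mat_delete (mat_delete ?P 0 0) m m)"
    using det_single_entry_column[of "mat_delete ?P 0 0" k m m] k
    by (auto simp: cofactor_def mat_delete_def)
  also have "mat_delete (mat_delete ?P 0 0) m m = interior_mat A m"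
    by (rule eq_matI) (use k in \<open>auto simp: mat_delete_def interior_mat_def\<close>)
  finally show ?thesis by (simp add: power2_eq_square)
qed

definition adj_frame :: "'a :: comm_ring_1 mat \<Rightarrow> nat \<Rightarrow> 'a mat" where
  "adj_frame A k = mat (Suc k) (Suc k) (\<lambda>(i, j).
     if j = 0 \<or> j = k then adj_mat A $$ (i, j) else if i = j then 1 else 0)"

text \<open>Multiplying by the adjugate frame turns the first and last column of A into
  det A times unit vectors, since A * adj A = det A * 1.\<close>
lemma mult_adj_frame:
  fixes A :: "'a :: comm_ring_1 mat"
  assumes A: "A \<in> carrier_mat (Suc k) (Suc k)"
  shows "A * adj_frame A k = mat (Suc k) (Suc k) (\<lambda>(i, j).
    if j = 0 \<or> j = k then (if i = j then det A else 0) else A $$ (i, j))"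
    (is "_ = ?P")
proof (rule eq_matI)
  fix i j assume "i < dim_row ?P" and "j < dim_col ?P"
  then have i: "i < Suc k" and j: "j < Suc k" by auto
  have product: "(A * B) $$ (i, j) = (\<Sum>l<Suc k. A $$ (i, l) * B $$ (l, j))"
    if "B \<in> carrier_mat (Suc k) (Suc k)" for B
    using A that i j by (simp add: times_mat_def scalar_prod_def atLeast0LessThan)
  have adj: "adj_mat A \<in> carrier_mat (Suc k) (Suc k)" "A * adj_mat A = det A \<cdot>\<^sub>m 1\<^sub>m (Suc k)"
    using adj_mat[OF A] by auto
  have frame: "adj_frame A k \<in> carrier_mat (Suc k) (Suc k)" by (simp add: adj_frame_def)
  show "(A * adj_frame A k) $$ (i, j) = ?P $$ (i, j)"
  proof (cases "j = 0 \<or> j = k")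
    case True
    have "(A * adj_frame A k) $$ (i, j) = (A * adj_mat A) $$ (i, j)"
      unfolding product[OF adj(1)] product[OF frame]
      by (rule sum.cong) (use True j in \<open>auto simp: adj_frame_def\<close>)
    then show ?thesis using True i j adj(2) by simp
  next
    case False
    have "(A * adj_frame A k) $$ (i, j) = (\<Sum>l<Suc k. if l = j then A $$ (i, j) else 0)"
      unfolding product[OF frame] by (rule sum.cong) (use False j in \<open>auto simp: adj_frame_def\<close>)
    then show ?thesis using False i j by simp
  qed
qed (use A in \<open>auto simp: adj_frame_def\<close>)

lemma det_adj_frame:
  fixes A :: "'a :: comm_ring_1 mat"
  assumes A: "A \<in> carrier_mat (Suc k) (Suc k)" and k: "k = Suc m"
  shows "det (adj_frame A k) = det (mat_delete A 0 0) * det (mat_delete A k k)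
    - det (mat_delete A 0 k) * det (mat_delete A k 0)"
proof -
  have "det (adj_frame A k) = cofactor A 0 0 * cofactor A k k - cofactor A 0 k * cofactor A k 0"
    by (subst det_identity_but_first_last_column[OF _ k])
      (use A in \<open>auto simp: adj_frame_def adj_mat_def mult.commute\<close>)
  moreover have "(-1) ^ k * (-1) ^ k = (1 :: 'a)"
    by (simp add: power_add[symmetric])
  ultimately show ?thesis by (simp add: cofactor_def mult.assoc mult.left_commute)
qed

lemma desnanot_jacobi_times_det:
  fixes A :: "'a :: comm_ring_1 mat"
  assumes A: "A \<in> carrier_mat (Suc (Suc m)) (Suc (Suc m))"
  shows "det A * (det (mat_delete A 0 0) * det (mat_delete A (Suc m) (Suc m))
      - det (mat_delete A 0 (Suc m)) * det (mat_delete A (Suc m) 0))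
    = det A ^ 2 * det (interior_mat A m)"
proof -
  have "det A * det (adj_frame A (Suc m)) = det (A * adj_frame A (Suc m))"
    by (rule det_mult[symmetric, OF A]) (simp add: adj_frame_def)
  also have "\<dots> = det A ^ 2 * det (interior_mat A m)"
    unfolding mult_adj_frame[OF A] by (rule det_scaled_unit_first_last_column) simp
  finally show ?thesis unfolding det_adj_frame[OF A refl] .
qed

lemma map_mat_delete: "map_mat f (mat_delete A i j) = mat_delete (map_mat f A) i j"
  by (rule eq_matI) (auto simp: mat_delete_def)

lemma map_interior_mat:
  "m < dim_row A \<Longrightarrow> m < dim_col A \<Longrightarrow> map_mat f (interior_mat A m) = interior_mat (map_mat f A) m"
  by (rule eq_matI) (auto simp: interior_mat_def)

text \<open>The factor det A is cancelled
  for the generic matrix x I + A, whose determinant is a monic polynomial, and the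
  identity is then specialised at x = 0.\<close>
theorem desnanot_jacobi:
  fixes A :: "'a :: idom mat"
  assumes A: "A \<in> carrier_mat (Suc (Suc m)) (Suc (Suc m))"
  shows "det (mat_delete A 0 0) * det (mat_delete A (Suc m) (Suc m))
      - det (mat_delete A 0 (Suc m)) * det (mat_delete A (Suc m) 0)
    = det A * det (interior_mat A m)"
proof -
  define B where "B = char_poly_matrix (-A)"
  have neg_A: "-A \<in> carrier_mat (Suc (Suc m)) (Suc (Suc m))" using A by simp
  have B: "B \<in> carrier_mat (Suc (Suc m)) (Suc (Suc m))" using neg_A by (simp add: B_def)
  have "det B \<noteq> 0"
    using degree_monic_char_poly[OF neg_A] by (auto simp: B_def char_poly_def)
  then have generic: "det (mat_delete B 0 0) * det (mat_delete B (Suc m) (Suc m))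
      - det (mat_delete B 0 (Suc m)) * det (mat_delete B (Suc m) 0)
    = det B * det (interior_mat B m)"
    using desnanot_jacobi_times_det[OF B] by (simp add: power2_eq_square mult.assoc)
  have eval_hom: "comm_ring_hom (\<lambda>p. poly p (0::'a))" by unfold_locales auto
  have eval_B: "map_mat (\<lambda>p. poly p 0) B = A"
    by (rule eq_matI) (use A in \<open>auto simp: B_def char_poly_matrix_def\<close>)
  from arg_cong[OF generic, of "\<lambda>p. poly p 0"] show ?thesis
    using B eval_B map_interior_mat[of m B "\<lambda>p. poly p 0"]
    by (simp del: comm_ring_hom.hom_det[OF eval_hom]
        add: comm_ring_hom.hom_det[OF eval_hom, symmetric] map_mat_delete)
qed

section \<open>Hankel determinants of the Q-system\<close>

lemma hankel_det_0: "hankel_det R 0 n = 1"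
  by (simp add: hankel_det_def)

lemma hankel_det_1: "hankel_det R 1 n = R 1 n"
  by (simp add: hankel_det_def det_single)

text \<open>Desnanot--Jacobi for the Hankel matrix of size m+2: its corner minors are Hankel
  matrices of size m+1 shifted by +1, -1, 0, 0 and its interior has size m.\<close>
lemma hankel_det_recurrence:
  fixes R :: "nat \<Rightarrow> int \<Rightarrow> 'a :: idom"
  shows "hankel_det R (Suc m) (n + 1) * hankel_det R (Suc m) (n - 1)
    = hankel_det R (Suc m) n ^ 2 + hankel_det R (Suc (Suc m)) n * hankel_det R m n"
proof -
  define H where "H a n = mat a a (\<lambda>(i, j). R 1 (n + int i + int j + 1 - int a))" for a n
  define A where "A = H (Suc (Suc m)) n"
  have A: "A \<in> carrier_mat (Suc (Suc m)) (Suc (Suc m))" by (simp add: A_def H_def)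
  have "mat_delete A 0 0 = H (Suc m) (n + 1)"
    and "mat_delete A (Suc m) (Suc m) = H (Suc m) (n - 1)"
    and "mat_delete A 0 (Suc m) = H (Suc m) n"
    and "mat_delete A (Suc m) 0 = H (Suc m) n"
    by (rule eq_matI; auto simp: A_def H_def mat_delete_def algebra_simps)+
  moreover have "interior_mat A m = H m n"
    by (rule eq_matI) (auto simp: A_def H_def interior_mat_def algebra_simps)
  ultimately show ?thesis
    using desnanot_jacobi[OF A] unfolding hankel_det_def H_def[symmetric] A_def
    by (simp add: power2_eq_square algebra_simps)
qed

lemma Q_system_recurrence_hankel:
  fixes R :: "nat \<Rightarrow> int \<Rightarrow> 'a :: idom"
  assumes R0: "\<And>n. R 0 n = 1"
    and nonzero: "\<And>a n. a < N \<Longrightarrow> R a n \<noteq> 0"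
    and recurrence: "\<And>a n. 1 \<le> a \<Longrightarrow> a < N \<Longrightarrow>
      R a (n + 1) * R a (n - 1) = (R a n)^2 + R (a + 1) n * R (a - 1) n"
  shows "a \<le> N \<Longrightarrow> R a n = hankel_det R a n"
proof (induction a arbitrary: n rule: less_induct)
  case (less a)
  consider "a = 0" | "a = 1" | m where "a = Suc (Suc m)"
    by (metis One_nat_def not0_implies_Suc)
  then show ?case
  proof cases
    case 1
    then show ?thesis by (simp add: R0 hankel_det_0)
  next
    case 2
    then show ?thesis using hankel_det_1[of R n] by simp
  next
    case (3 m)
    have IH: "R m = hankel_det R m" "R (Suc m) = hankel_det R (Suc m)"
      using less 3 by auto
    text \<open>Both families satisfy the recurrence at level m+1; cancel R m n \<noteq> 0.\<close>
    have "R a n * R m n = hankel_det R a n * R m n"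
      using recurrence[of "Suc m" n] hankel_det_recurrence[of R m n] less.prems 3
      by (simp add: IH algebra_simps)
    then show ?thesis using nonzero[of m n] less.prems 3 by simp
  qed
qed

theorem mainTheorem1:
  fixes r :: nat and R :: "nat \<Rightarrow> int \<Rightarrow> 'a::field_char_0"
  assumes "r \<ge> 1"
    and "alg_indep_Q (\<lambda>(a, m). R a m) ({1..r} \<times> {0, 1})"
    and "is_Q_system r R"
  shows "(\<forall>a n. 1 \<le> a \<and> a \<le> r + 1 \<longrightarrow> R a n = hankel_det R a n) \<and>
         (\<forall>n. det (mat (r + 1) (r + 1) (\<lambda>(i, j). R 1 (n + int i + int j - int r))) = 1)"
proof -
  have hankel: "R a n = hankel_det R a n" if "a \<le> r + 1" for a n
    by (rule Q_system_recurrence_hankel[OF _ _ _ that])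
      (use assms(3) in \<open>auto simp: is_Q_system_def\<close>)
  have "det (mat (r + 1) (r + 1) (\<lambda>(i, j). R 1 (n + int i + int j - int r)))
      = hankel_det R (r + 1) n" for n
    unfolding hankel_det_def by (rule arg_cong[of _ _ det], rule cong_mat) (auto simp: algebra_simps)
  also have "hankel_det R (r + 1) n = 1" for n
    using hankel[of "r + 1" n] assms(3) by (simp add: is_Q_system_def)
  finally show ?thesis using hankel by auto
qed

end
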